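(* Let $L=\mathbb{Z}v$ be a one-dimensional lattice with $v\in\mathbb{R}_{>0}$, and assume $b\ge3v+1$. Then two elements chosen independently and uniformly at random from $L\cap[0,b)$ generate $L$ with probability greater than $\frac{3^3}{\pi^22^3}>\frac13$. *)

theory Defs
  imports Complex_Main
begin

definition lattice1 :: "real \<Rightarrow> real set" where
  "lattice1 v = range (\<lambda>k::int. of_int k * v)"

definition gen2 :: "real \<Rightarrow> real \<Rightarrow> real set" where
  "gen2 x y = {of_int m * x + of_int n * y | m n :: int. True}"

definition sample :: "real \<Rightarrow> real \<Rightarrow> real set" where
  "sample v b = lattice1 v \<inter> {0..<b}"

definition gen_prob :: "real \<Rightarrow> real \<Rightarrow> real" where
  "gen_prob v b =
     real (card {(x, y). x \<in> sample v b \<and> y \<in> sample v b \<and> gen2 x y = lattice1 v})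
     / real (card (sample v b))^2"

end

theory Submission
  imports Defs "HOL-Analysis.Complex_Transcendental"
begin

text \<open>
  A pair of sample points \<open>(i v, j v)\<close> generates \<open>\<int>v\<close> exactly when \<open>gcd i j = 1\<close>, so the
  probability is the proportion of coprime pairs in \<open>{0..M}\<^sup>2\<close> with \<open>M + 1 = \<lceil>b/v\<rceil>\<close>.
  A non-coprime pair in \<open>{1..M}\<^sup>2\<close> has the common divisor 2 or an odd common divisor
  \<open>3 \<le> d \<le> M\<close>, and there are at most \<open>(M/d)\<^sup>2\<close> pairs of multiples of \<open>d\<close>; since the
  inverse squares of the odd numbers \<open>\<ge> 3\<close> sum to less than \<open>1/4\<close>, fewer than \<open>M\<^sup>2/2\<close>
  pairs are non-coprime. Together with \<open>(0,1)\<close> and \<open>(1,0)\<close> this gives a proportion above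
  \<open>(M\<^sup>2/2 + 2)/(M+1)\<^sup>2 \<ge> 2/5\<close>, which exceeds \<open>27/(8\<pi>\<^sup>2) \<approx> 0.342\<close>. Only \<open>b > v\<close>
  (i.e.\ \<open>M \<ge> 1\<close>) is needed.
\<close>

lemma sum_inverse_odd_squares_le:
  "(\<Sum>k=1..K. 1 / (2 * real k + 1)^2) \<le> 1/4 - 1 / (4 * (real K + 1))"
proof (induction K)
  case 0
  then show ?case by simp
next
  case (Suc K)
  have "4 * (real K + 1) * (real K + 2) \<le> (2 * real (Suc K) + 1)^2"
    by (simp add: power2_eq_square algebra_simps)
  then have "1 / (2 * real (Suc K) + 1)^2 \<le> 1 / (4 * (real K + 1) * (real K + 2))"
    by (intro divide_left_mono) auto
  also have "\<dots> = 1 / (4 * (real K + 1)) - 1 / (4 * (real K + 2))"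
    by (simp add: divide_simps)
  finally show ?case using Suc by (simp add: add_ac)
qed

lemma card_multiples_atLeastAtMost:
  fixes d M :: nat
  assumes "d > 0"
  shows "card {i \<in> {1..M}. d dvd i} = M div d"
proof -
  have "{i \<in> {1..M}. d dvd i} = (\<lambda>q. d * q) ` {1..M div d}"
  proof (intro set_eqI iffI)
    fix i assume i: "i \<in> {i \<in> {1..M}. d dvd i}"
    then obtain q where q: "i = d * q" by blast
    with i have "1 \<le> q" by (cases q) auto
    moreover have "q \<le> M div d"
      using i q assms by (metis div_le_mono mem_Collect_eq atLeastAtMost_iff nonzero_mult_div_cancel_left not_gr0)
    ultimately show "i \<in> (\<lambda>q. d * q) ` {1..M div d}" using q by auto
  next
    fix i assume "i \<in> (\<lambda>q. d * q) ` {1..M div d}"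
    then obtain q where q: "q \<in> {1..M div d}" "i = d * q" by (rule imageE) simp
    have "d * q \<le> d * (M div d)" using q(1) by simp
    also have "\<dots> \<le> M" by simp
    finally show "i \<in> {i \<in> {1..M}. d dvd i}" using q assms by auto
  qed
  moreover have "inj_on (\<lambda>q. d * q) {1..M div d}" using assms by (auto simp: inj_on_def)
  ultimately show ?thesis by (simp add: card_image)
qed

lemma card_common_multiples_le:
  fixes d M :: nat
  assumes "d > 0"
  shows "real (card {(i, j). i \<in> {1..M} \<and> j \<in> {1..M} \<and> d dvd i \<and> d dvd j}) \<le> real M^2 / real d^2"
proof -
  have "{(i, j). i \<in> {1..M} \<and> j \<in> {1..M} \<and> d dvd i \<and> d dvd j}
      = {i \<in> {1..M}. d dvd i} \<times> {i \<in> {1..M}. d dvd i}" by auto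
  then have "card {(i, j). i \<in> {1..M} \<and> j \<in> {1..M} \<and> d dvd i \<and> d dvd j} = (M div d)^2"
    using card_multiples_atLeastAtMost[OF assms] by (simp add: card_cartesian_product power2_eq_square)
  moreover have "real (M div d) \<le> real M / real d"
    using assms by (simp add: le_divide_eq flip: of_nat_mult)
  then have "real (M div d)^2 \<le> (real M / real d)^2" by (rule power_mono) simp
  ultimately show ?thesis by (simp add: power_divide)
qed

lemma not_coprime_common_divisor_two_or_odd:
  fixes i j :: nat
  assumes "i > 0" and "\<not> coprime i j"
  obtains "2 dvd i" "2 dvd j"
    | k where "1 \<le> k" "2 * k + 1 \<le> i" "(2 * k + 1) dvd i" "(2 * k + 1) dvd j"
proof -
  let ?g = "gcd i j"
  have "?g \<noteq> 1" using assms(2) by (simp add: coprime_iff_gcd_eq_1)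
  moreover have "?g \<noteq> 0" using assms(1) by simp
  ultimately have "?g \<ge> 2" by linarith
  have "?g \<le> i" using assms(1) by (simp add: gcd_le1_nat)
  show thesis
  proof (cases "even ?g")
    case True
    then show thesis using that(1) dvd_trans[of 2 ?g] by blast
  next
    case False
    then obtain k where k: "?g = 2 * k + 1" by (metis oddE)
    with \<open>?g \<ge> 2\<close> have "1 \<le> k" by linarith
    with k \<open>?g \<le> i\<close> show thesis using that(2) by (metis gcd_dvd1 gcd_dvd2)
  qed
qed

lemma card_not_coprime_pairs_less:
  fixes M :: nat
  assumes "M \<ge> 1"
  shows "real (card {(i, j). i \<in> {1..M} \<and> j \<in> {1..M} \<and> \<not> coprime i j}) < real M^2 / 2"
proof -
  define A where "A d = {(i, j). i \<in> {1..M} \<and> j \<in> {1..M} \<and> d dvd i \<and> d dvd j}" for d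
  have cover: "{(i, j). i \<in> {1..M} \<and> j \<in> {1..M} \<and> \<not> coprime i j} \<subseteq> A 2 \<union> (\<Union>k\<in>{1..M}. A (2 * k + 1))"
  proof
    fix x assume "x \<in> {(i, j). i \<in> {1..M} \<and> j \<in> {1..M} \<and> \<not> coprime i j}"
    then obtain i j where ij: "x = (i, j)" "1 \<le> i" "i \<le> M" "j \<in> {1..M}" "\<not> coprime i j" by auto
    from \<open>1 \<le> i\<close> have "i > 0" by simp
    then show "x \<in> A 2 \<union> (\<Union>k\<in>{1..M}. A (2 * k + 1))"
      using ij(5)
    proof (rule not_coprime_common_divisor_two_or_odd)
      assume "2 dvd i" "2 dvd j"
      then show ?thesis using ij by (auto simp: A_def)
    next
      fix k assume k: "1 \<le> k" "2 * k + 1 \<le> i" "(2 * k + 1) dvd i" "(2 * k + 1) dvd j"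
      then have "(i, j) \<in> A (2 * k + 1)" "k \<in> {1..M}" using ij by (auto simp: A_def)
      then show ?thesis using ij(1) by blast
    qed
  qed
  have "finite (A d)" for d
    by (rule finite_subset[of _ "{1..M} \<times> {1..M}"]) (auto simp: A_def)
  then have "card {(i, j). i \<in> {1..M} \<and> j \<in> {1..M} \<and> \<not> coprime i j}
      \<le> card (A 2) + (\<Sum>k\<in>{1..M}. card (A (2 * k + 1)))"
    using card_mono[OF _ cover] card_Un_le[of "A 2"] card_UN_le[of "{1..M}" "\<lambda>k. A (2 * k + 1)"]
    by (meson finite_UN_I finite_Un finite_atLeastAtMost le_trans add_left_mono)
  then have "real (card {(i, j). i \<in> {1..M} \<and> j \<in> {1..M} \<and> \<not> coprime i j})
      \<le> real (card (A 2)) + (\<Sum>k\<in>{1..M}. real (card (A (2 * k + 1))))"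
    by (simp flip: of_nat_sum of_nat_add)
  also have "\<dots> \<le> real M^2 / 4 + (\<Sum>k\<in>{1..M}. real M^2 * (1 / (2 * real k + 1)^2))"
    using card_common_multiples_le[of 2 M] card_common_multiples_le[of "2 * _ + 1" M]
    unfolding A_def by (intro add_mono sum_mono) (auto simp: add.commute)
  also have "\<dots> \<le> real M^2 / 4 + real M^2 * (1/4 - 1 / (4 * (real M + 1)))"
    by (simp only: sum_distrib_left[symmetric]) (intro add_left_mono mult_left_mono sum_inverse_odd_squares_le, simp)
  also have "\<dots> < real M^2 / 2"
    using assms by (simp add: field_simps)
  finally show ?thesis .
qed

lemma card_coprime_pairs_gt:
  fixes M :: nat
  assumes "M \<ge> 1"
  shows "real (card {(i, j). i < M + 1 \<and> j < M + 1 \<and> coprime i j}) > real M^2 / 2 + 2"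
proof -
  define S where "S = {1..M} \<times> {1..M}"
  define B where "B = {(i, j). i \<in> {1..M} \<and> j \<in> {1..M} \<and> \<not> coprime i j}"
  have "B \<subseteq> S" "finite S" by (auto simp: B_def S_def)
  then have "card (S - B) = card S - card B" "card B \<le> card S"
    by (simp_all add: card_Diff_subset finite_subset card_mono)
  then have "real (card (S - B)) = real M^2 - real (card B)"
    by (simp add: of_nat_diff S_def power2_eq_square)
  let ?C = "{(i, j). i < M + 1 \<and> j < M + 1 \<and> coprime i j}"
  have "(S - B) \<union> {(0, 1), (1, 0)} \<subseteq> ?C"
    using assms by (auto simp: S_def B_def)
  moreover have "finite ?C"
    by (rule finite_subset[of _ "{..<M + 1} \<times> {..<M + 1}"]) auto
  ultimately have "card ((S - B) \<union> {(0, 1), (1, 0)}) \<le> card ?C"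
    by (rule card_mono[rotated])
  moreover have "card ((S - B) \<union> {(0, 1), (1, 0)}) = card (S - B) + 2"
    using \<open>finite S\<close> by (subst card_Un_disjoint) (auto simp: S_def)
  ultimately have "card (S - B) + 2 \<le> card ?C" by simp
  then show ?thesis
    using \<open>real (card (S - B)) = _\<close> card_not_coprime_pairs_less[OF assms] unfolding B_def by linarith
qed

lemma coprime_pairs_fraction_gt:
  fixes N :: nat
  assumes "N \<ge> 2"
  shows "real (card {(i, j). i < N \<and> j < N \<and> coprime i j}) / real N^2 > 2/5"
proof -
  define M where "M = N - 1"
  have M: "N = M + 1" "M \<ge> 1" using assms by (simp_all add: M_def)
  \<comment> \<open>\<open>(M\<^sup>2/2 + 2)/(M+1)\<^sup>2\<close> attains its minimum \<open>2/5\<close> at \<open>M = 4\<close>\<close>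
  have "2/5 * (real M + 1)^2 \<le> real M^2 / 2 + 2"
    using zero_le_power2[of "real M - 4"] by (simp add: power2_eq_square algebra_simps)
  also have "\<dots> < real (card {(i, j). i < N \<and> j < N \<and> coprime i j})"
    using card_coprime_pairs_gt[OF M(2)] M(1) by simp
  finally show ?thesis using M(1) by (simp add: field_simps)
qed

lemma gen2_scaled_eq_lattice1_iff:
  fixes v :: real
  assumes "v > 0"
  shows "gen2 (real i * v) (real j * v) = lattice1 v \<longleftrightarrow> coprime i j"
proof
  assume gen: "gen2 (real i * v) (real j * v) = lattice1 v"
  have "v \<in> lattice1 v" unfolding lattice1_def by (auto intro: range_eqI[of _ _ 1])
  then have "v \<in> gen2 (real i * v) (real j * v)" using gen by simp
  then obtain m n :: int where "v = of_int m * (real i * v) + of_int n * (real j * v)"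
    unfolding gen2_def by blast
  then have "1 * v = of_int (m * int i + n * int j) * v" by (simp add: algebra_simps)
  then have "real_of_int (m * int i + n * int j) = 1" using assms by simp
  then have "m * int i + n * int j = 1" by (simp only: of_int_eq_1_iff)
  then have "coprime (int i) (int j)" by (metis coprime_def dvd_add dvd_mult)
  then show "coprime i j" by simp
next
  assume "coprime i j"
  then have "gcd (int i) (int j) = 1" by simp
  then obtain m n :: int where mn: "m * int i + n * int j = 1"
    using bezout_int[of "int i" "int j"] by auto
  show "gen2 (real i * v) (real j * v) = lattice1 v"
  proof (intro set_eqI iffI)
    fix x assume "x \<in> gen2 (real i * v) (real j * v)"
    then obtain a b :: int where "x = of_int a * (real i * v) + of_int b * (real j * v)"
      unfolding gen2_def by auto
    then have "x = of_int (a * int i + b * int j) * v" by (simp add: algebra_simps)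
    then show "x \<in> lattice1 v" unfolding lattice1_def by (rule image_eqI) simp
  next
    fix x assume "x \<in> lattice1 v"
    then obtain k :: int where "x = of_int k * v" unfolding lattice1_def by auto
    also have "\<dots> = of_int k * of_int (m * int i + n * int j) * v" using mn by simp
    also have "\<dots> = of_int (k * m) * (real i * v) + of_int (k * n) * (real j * v)"
      by (simp add: algebra_simps)
    finally show "x \<in> gen2 (real i * v) (real j * v)" unfolding gen2_def by blast
  qed
qed

lemma sample_eq_image:
  fixes v b :: real
  assumes "v > 0"
  shows "sample v b = (\<lambda>k. real k * v) ` {..<nat \<lceil>b / v\<rceil>}"
proof (intro set_eqI iffI)
  fix x assume "x \<in> sample v b"
  then obtain k :: int where k: "x = of_int k * v" "0 \<le> of_int k * v" "of_int k * v < b"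
    unfolding sample_def lattice1_def by auto
  have "k \<ge> 0" using k(2) assms by (simp add: zero_le_mult_iff)
  moreover have "of_int k < b / v" using k(3) assms by (simp add: field_simps)
  then have "k < \<lceil>b / v\<rceil>" by (simp add: less_ceiling_iff)
  ultimately have "nat k \<in> {..<nat \<lceil>b / v\<rceil>}" by (metis lessThan_iff nat_less_eq_zless)
  moreover have "x = real (nat k) * v" using k(1) \<open>k \<ge> 0\<close> by simp
  ultimately show "x \<in> (\<lambda>k. real k * v) ` {..<nat \<lceil>b / v\<rceil>}" by blast
next
  fix x assume "x \<in> (\<lambda>k. real k * v) ` {..<nat \<lceil>b / v\<rceil>}"
  then obtain k :: nat where k: "k \<in> {..<nat \<lceil>b / v\<rceil>}" "x = real k * v" by (rule imageE) simp
  then have "int k < \<lceil>b / v\<rceil>" by simp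
  then have "real k < b / v" by (simp add: less_ceiling_iff)
  then have "x < b" using k(2) assms by (simp add: field_simps)
  moreover have "x \<in> lattice1 v" unfolding lattice1_def using k(2) by (intro range_eqI[of _ _ "int k"]) simp
  ultimately show "x \<in> sample v b" unfolding sample_def using k(2) assms by auto
qed

lemma gen_prob_eq_coprime_fraction:
  fixes v b :: real
  assumes "v > 0"
  shows "gen_prob v b = real (card {(i, j). i < nat \<lceil>b / v\<rceil> \<and> j < nat \<lceil>b / v\<rceil> \<and> coprime i j})
                        / real (nat \<lceil>b / v\<rceil>)^2"
proof -
  define N where "N = nat \<lceil>b / v\<rceil>"
  have inj: "inj (\<lambda>k::nat. real k * v)" "inj (\<lambda>(i::nat, j::nat). (real i * v, real j * v))"
    using assms by (auto simp: inj_def)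
  have sample: "sample v b = (\<lambda>k. real k * v) ` {..<N}"
    using sample_eq_image[OF assms] by (simp add: N_def)
  have "{(x, y). x \<in> sample v b \<and> y \<in> sample v b \<and> gen2 x y = lattice1 v}
      = (\<lambda>(i, j). (real i * v, real j * v)) ` {(i, j). i < N \<and> j < N \<and> coprime i j}"
    unfolding sample using gen2_scaled_eq_lattice1_iff[OF assms] by auto
  moreover have "card (sample v b) = N"
    unfolding sample by (simp add: card_image inj_on_subset[OF inj(1)])
  ultimately show ?thesis
    unfolding gen_prob_def N_def[symmetric] by (simp add: card_image inj_on_subset[OF inj(2)])
qed

lemma pi_constant_bounds: "1/3 < 3^3 / (pi^2 * 2^3)" "3^3 / (pi^2 * 2^3) < (2/5 :: real)"
proof -
  have "pi^2 < 3.15^2" using pi_approx(2) by (intro power_strict_mono) auto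
  then show "1/3 < 3^3 / (pi^2 * 2^3)" by (simp add: field_simps)
  have "3^2 < pi^2" using pi_gt3 by (intro power_strict_mono) auto
  then show "3^3 / (pi^2 * 2^3) < (2/5 :: real)" by (simp add: field_simps)
qed

theorem lemma7p9:
  fixes v b :: real
  assumes "v > 0" and "b \<ge> 3 * v + 1"
  shows "gen_prob v b > 3^3 / (pi^2 * 2^3) \<and> 3^3 / (pi^2 * 2^3) > (1/3 :: real)"
proof -
  have "b / v > 1" using assms by (simp add: field_simps)
  then have "nat \<lceil>b / v\<rceil> \<ge> 2" by (simp add: le_nat_iff le_ceiling_iff)
  then have "gen_prob v b > 2/5"
    unfolding gen_prob_eq_coprime_fraction[OF assms(1)] by (rule coprime_pairs_fraction_gt)
  then show ?thesis using pi_constant_bounds by linarith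
qed

end
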